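(* Let $n\ge1$, let $\mathcal W$ be an $(n,T(n))$-weakly Ramsey non-P-point in standard position on $\omega^2$, let $\tau$ be any $n$-type, and let $[\omega^2]_\tau$ be partitioned into finitely many pieces. Then there is $H\in\mathcal W$ such that $[H]_\tau$ is included in one of the pieces.
   Context: Ultrafilters are nonprincipal. A non-P-point in standard position is an ultrafilter $\mathcal W$ on $\omega^2$ such that the first projection $\pi_1:\omega^2\to\omega$ is neither finite-to-one nor constant on any set in $\mathcal W$. For a countably infinite set $S$, an ultrafilter $\mathcal W$ on $S$ is $(n,t)$-weakly Ramsey if whenever $[S]^n$ (the $n$-element subsets of $S$) is partitioned into finitely many pieces, there is $H\in\mathcal W$ with $[H]^n$ meeting at most $t$ pieces. An $n$-type is a linear pre-order of the $2n$ formal symbols $x_1,\dots,x_n,y_1,\dots,y_n$ such that $y_1<\dots<y_n$ (strictly), each $x_i<y_i$ strictly, and any two distinct equivalent symbols are both $x$'s. An $n$-element set $\{\langle a_1,b_1\rangle,\dots,\langle a_n,b_n\rangle\}\subseteq\omega^2$, listed so that $b_1<\dots<b_n$ (which requires distinct second coordinates), realizes the $n$-type $\tau$ if for all symbols $s,t$ we have $s\le_\tau t$ iff $v(s)\le v(t)$, where $v(x_i)=a_i$, $v(y_i)=b_i$. $T(n)$ is the number of $n$-types. For $S\subseteq\omega^2$, $[S]_\tau$ is the set of $n$-element subsets of $S$ realizing $\tau$. *)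

theory Defs
  imports Main
begin

type_synonym pt = "nat \<times> nat"

definition is_ultrafilter :: "'a set set \<Rightarrow> bool" where
  "is_ultrafilter U \<longleftrightarrow> UNIV \<in> U \<and> {} \<notin> U
     \<and> (\<forall>A B. A \<in> U \<and> A \<subseteq> B \<longrightarrow> B \<in> U)
     \<and> (\<forall>A B. A \<in> U \<and> B \<in> U \<longrightarrow> A \<inter> B \<in> U)
     \<and> (\<forall>A. A \<in> U \<or> - A \<in> U)"

definition nonprincipal :: "'a set set \<Rightarrow> bool" where
  "nonprincipal U \<longleftrightarrow> (\<forall>A\<in>U. infinite A)"

definition finite_to_one_on :: "('a \<Rightarrow> 'b) \<Rightarrow> 'a set \<Rightarrow> bool" where
  "finite_to_one_on f A \<longleftrightarrow> (\<forall>k. finite {p \<in> A. f p = k})"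

definition constant_on :: "('a \<Rightarrow> 'b) \<Rightarrow> 'a set \<Rightarrow> bool" where
  "constant_on f A \<longleftrightarrow> (\<exists>k. \<forall>p\<in>A. f p = k)"

definition non_P_point_std :: "pt set set \<Rightarrow> bool" where
  "non_P_point_std W \<longleftrightarrow> is_ultrafilter W \<and> nonprincipal W
     \<and> (\<forall>A\<in>W. \<not> finite_to_one_on fst A \<and> \<not> constant_on fst A)"

definition nsubsets :: "'a set \<Rightarrow> nat \<Rightarrow> 'a set set" where
  "nsubsets H n = {F. F \<subseteq> H \<and> finite F \<and> card F = n}"

text \<open>(n,t)-weakly Ramsey ultrafilter on the (countably infinite) type 'a:
  partitions of [S]^n into finitely many pieces are given by colourings
  c with finitely many values on [S]^n.\<close>
definition weakly_ramsey :: "nat \<Rightarrow> nat \<Rightarrow> 'a set set \<Rightarrow> bool" where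
  "weakly_ramsey n t U \<longleftrightarrow>
     (\<forall>c :: 'a set \<Rightarrow> nat. finite (c ` nsubsets UNIV n) \<longrightarrow>
        (\<exists>H\<in>U. card (c ` nsubsets H n) \<le> t))"

text \<open>Formal symbols: (False, i) is x_i and (True, i) is y_i, for 1 <= i <= n.\<close>
type_synonym sym = "bool \<times> nat"

definition Sym :: "nat \<Rightarrow> sym set" where
  "Sym n = UNIV \<times> {1..n}"

definition strict_in :: "(sym \<times> sym) set \<Rightarrow> sym \<Rightarrow> sym \<Rightarrow> bool" where
  "strict_in R s t \<longleftrightarrow> (s, t) \<in> R \<and> (t, s) \<notin> R"

definition is_ntype :: "nat \<Rightarrow> (sym \<times> sym) set \<Rightarrow> bool" where
  "is_ntype n R \<longleftrightarrow> R \<subseteq> Sym n \<times> Sym n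
     \<and> (\<forall>s\<in>Sym n. (s, s) \<in> R)
     \<and> trans R
     \<and> (\<forall>s\<in>Sym n. \<forall>t\<in>Sym n. (s, t) \<in> R \<or> (t, s) \<in> R)
     \<and> (\<forall>i\<in>{1..n}. \<forall>j\<in>{1..n}. i < j \<longrightarrow> strict_in R (True, i) (True, j))
     \<and> (\<forall>i\<in>{1..n}. strict_in R (False, i) (True, i))
     \<and> (\<forall>s\<in>Sym n. \<forall>t\<in>Sym n. s \<noteq> t \<and> (s, t) \<in> R \<and> (t, s) \<in> R
           \<longrightarrow> fst s = False \<and> fst t = False)"

definition T :: "nat \<Rightarrow> nat" where
  "T n = card {R. is_ntype n R}"

definition realizes :: "nat \<Rightarrow> pt set \<Rightarrow> (sym \<times> sym) set \<Rightarrow> bool" where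
  "realizes n F R \<longleftrightarrow> (\<exists>a b :: nat \<Rightarrow> nat.
      strict_mono_on {1..n} b
      \<and> F = (\<lambda>i. (a i, b i)) ` {1..n}
      \<and> (\<forall>s\<in>Sym n. \<forall>t\<in>Sym n.
            (s, t) \<in> R \<longleftrightarrow>
            (if fst s then b (snd s) else a (snd s)) \<le> (if fst t then b (snd t) else a (snd t))))"

definition typed_subsets :: "nat \<Rightarrow> pt set \<Rightarrow> (sym \<times> sym) set \<Rightarrow> pt set set" where
  "typed_subsets n S R = {F. F \<subseteq> S \<and> finite F \<and> card F = n \<and> realizes n F R}"

end

theory Submission
  imports Defs "HOL-Library.Infinite_Set"
begin

text \<open>Colour each n-subset of \<omega> \<times> \<omega> by its type, except that the \<open>\<tau>\<close>-subsets keep their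
  given colours, shifted past the type colours. Every set in a non-P-point in standard position
  contains a set of the ultrafilter with infinitely many infinite columns, and inside such a set
  every type is realised by choosing the coordinates greedily in the order the type prescribes.
  So on a set \<open>H \<in> W\<close> meeting at most \<open>T n\<close> colours, the \<open>T n - 1\<close> types other than \<open>\<tau>\<close> already
  use all colours but one, and the \<open>\<tau>\<close>-subsets of \<open>H\<close> all get the same colour.\<close>

definition infinite_columns :: "pt set \<Rightarrow> bool" where
  "infinite_columns H \<longleftrightarrow> infinite (fst ` H) \<and> (\<forall>p\<in>H. infinite {b. (fst p, b) \<in> H})"

lemma ultrafilter_finite_UN:
  assumes U: "is_ultrafilter W" and fin: "finite I" and UN: "(\<Union>i\<in>I. P i) \<in> W"
  shows "\<exists>i\<in>I. P i \<in> W"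
  using fin UN
proof (induction I rule: finite_induct)
  case empty
  then show ?case using U unfolding is_ultrafilter_def by simp
next
  case (insert i I)
  show ?case
  proof (cases "P i \<in> W")
    case False
    then have "- P i \<in> W" using U unfolding is_ultrafilter_def by blast
    with insert.prems have "- P i \<inter> (\<Union>j\<in>insert i I. P j) \<in> W"
      using U unfolding is_ultrafilter_def by blast
    moreover have "- P i \<inter> (\<Union>j\<in>insert i I. P j) \<subseteq> (\<Union>j\<in>I. P j)" by auto
    ultimately have "(\<Union>j\<in>I. P j) \<in> W" using U unfolding is_ultrafilter_def by blast
    then show ?thesis using insert.IH by blast
  qed blast
qed

text \<open>Discarding the finite columns of \<open>H\<close> leaves a set in \<open>W\<close>, because \<open>fst\<close> is not
  finite-to-one on what is discarded; it has infinitely many columns because \<open>fst\<close> is not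
  constant on any set in \<open>W\<close>.\<close>

lemma non_P_point_std_infinite_columns_subset:
  assumes NP: "non_P_point_std W" and H: "H \<in> W"
  shows "\<exists>H'\<in>W. H' \<subseteq> H \<and> infinite_columns H'"
proof -
  have U: "is_ultrafilter W"
    and NPd: "\<And>A. A \<in> W \<Longrightarrow> \<not> finite_to_one_on fst A \<and> \<not> constant_on fst A"
    using NP unfolding non_P_point_std_def by auto
  define H' where "H' = {p\<in>H. infinite {q\<in>H. fst q = fst p}}"
  have "finite_to_one_on fst (H - H')"
    unfolding finite_to_one_on_def
  proof
    fix k
    show "finite {p \<in> H - H'. fst p = k}"
    proof (cases "\<exists>p\<in>H - H'. fst p = k")
      case True
      then have "finite {q\<in>H. fst q = k}" unfolding H'_def by auto
      then show ?thesis by (rule rev_finite_subset) auto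
    next
      case False
      then have "{p \<in> H - H'. fst p = k} = {}" by blast
      then show ?thesis by (metis finite.emptyI)
    qed
  qed
  then have "H - H' \<notin> W" using NPd by blast
  then have H'W: "H' \<in> W"
    using H U unfolding is_ultrafilter_def by (metis Diff_eq)
  have "infinite {b. (fst p, b) \<in> H'}" if p: "p \<in> H'" for p
  proof -
    have "{b. (fst p, b) \<in> H'} = snd ` {q\<in>H. fst q = fst p}"
      using p unfolding H'_def by (force simp: image_iff)
    moreover have "inj_on snd {q\<in>H. fst q = fst p}" by (auto simp: inj_on_def prod_eq_iff)
    ultimately show ?thesis using p unfolding H'_def by (simp add: finite_image_iff)
  qed
  moreover have "infinite (fst ` H')"
  proof
    assume fin: "finite (fst ` H')"
    have "H' = (\<Union>a\<in>fst ` H'. {p\<in>H'. fst p = a})" by auto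
    then have "(\<Union>a\<in>fst ` H'. {p\<in>H'. fst p = a}) \<in> W" using H'W by simp
    then obtain a where "{p\<in>H'. fst p = a} \<in> W" using ultrafilter_finite_UN[OF U fin] by blast
    moreover have "constant_on fst {p\<in>H'. fst p = a}" unfolding constant_on_def by auto
    ultimately show False using NPd by blast
  qed
  moreover have "H' \<subseteq> H" unfolding H'_def by auto
  ultimately show ?thesis using H'W unfolding infinite_columns_def by blast
qed

lemma infinite_nat_exceeds_finite:
  assumes "infinite (S :: nat set)" and "finite A"
  shows "\<exists>v\<in>S. \<forall>a\<in>A. a < v"
proof -
  obtain v where "v \<in> S" and "Max (insert 0 A) < v"
    using assms(1) unfolding infinite_nat_iff_unbounded by blast
  then show ?thesis using assms(2) by (meson Max_ge finite_insert insertCI le_less_trans)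
qed

lemma strict_mono_on_lessThan_Suc_upd:
  assumes "strict_mono_on {..<k} g" and "\<And>j. j < k \<Longrightarrow> g j < v"
  shows "strict_mono_on {..<Suc k} (g(k := v))"
  using assms by (auto simp: strict_mono_on_def less_Suc_eq)

text \<open>The values are chosen one rank at a time, each above all earlier ones: an \<open>x\<close>-rank gets
  a column of \<open>H\<close>, and a \<open>y\<close>-rank gets a point of the column already chosen for its partner.\<close>

lemma infinite_columns_increasing_embedding:
  fixes x y :: "'i \<Rightarrow> nat"
  assumes H: "infinite_columns H"
    and xy: "\<And>i. i \<in> I \<Longrightarrow> x i < y i" and inj: "inj_on y I"
    and x_neq_y: "\<And>i j. i \<in> I \<Longrightarrow> j \<in> I \<Longrightarrow> x i \<noteq> y j"
  shows "\<exists>g. strict_mono_on {..<k} g \<and> (\<forall>i\<in>I. x i < k \<longrightarrow> g (x i) \<in> fst ` H)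
           \<and> (\<forall>i\<in>I. y i < k \<longrightarrow> (g (x i), g (y i)) \<in> H)"
proof (induction k)
  case 0
  show ?case by (auto simp: strict_mono_on_def)
next
  case (Suc k)
  then obtain g where mono: "strict_mono_on {..<k} g"
    and xs: "\<forall>i\<in>I. x i < k \<longrightarrow> g (x i) \<in> fst ` H"
    and ys: "\<forall>i\<in>I. y i < k \<longrightarrow> (g (x i), g (y i)) \<in> H"
    by blast
  have above: "\<exists>v\<in>S. \<forall>j<k. g j < v" if "infinite S" for S
    using infinite_nat_exceeds_finite[OF that, of "g ` {..<k}"] by auto
  consider (is_y) i where "i \<in> I" "y i = k" | (not_y) "\<forall>i\<in>I. y i \<noteq> k" by blast
  then show ?case
  proof cases
    case is_y
    then have "x i < k" using xy by fastforce
    then obtain p where "p \<in> H" "fst p = g (x i)" using xs is_y(1) by fastforce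
    then have "infinite {b. (g (x i), b) \<in> H}" using H unfolding infinite_columns_def by metis
    then obtain v where v: "(g (x i), v) \<in> H" "\<forall>j<k. g j < v" using above by blast
    have "(g(k := v)) (x j) \<in> fst ` H" if "j \<in> I" "x j < Suc k" for j
      using xs x_neq_y[OF that(1) is_y(1)] that is_y(2) by auto
    moreover have "((g(k := v)) (x j), (g(k := v)) (y j)) \<in> H" if "j \<in> I" "y j < Suc k" for j
    proof (cases "y j = k")
      case True
      then have "j = i" using inj_onD[OF inj] that(1) is_y by metis
      then show ?thesis using v(1) True \<open>x i < k\<close> by simp
    next
      case False
      then show ?thesis using ys xy[OF that(1)] that by auto
    qed
    ultimately have "(\<forall>j\<in>I. x j < Suc k \<longrightarrow> (g(k := v)) (x j) \<in> fst ` H)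
        \<and> (\<forall>j\<in>I. y j < Suc k \<longrightarrow> ((g(k := v)) (x j), (g(k := v)) (y j)) \<in> H)"
      by blast
    then show ?thesis using strict_mono_on_lessThan_Suc_upd[OF mono] v(2) by blast
  next
    case not_y
    obtain v where v: "v \<in> fst ` H" "\<forall>j<k. g j < v"
      using above H unfolding infinite_columns_def by blast
    have "(\<forall>j\<in>I. x j < Suc k \<longrightarrow> (g(k := v)) (x j) \<in> fst ` H)
        \<and> (\<forall>j\<in>I. y j < Suc k \<longrightarrow> ((g(k := v)) (x j), (g(k := v)) (y j)) \<in> H)"
    proof (intro conjI ballI impI)
      fix j assume j: "j \<in> I" "x j < Suc k"
      then show "(g(k := v)) (x j) \<in> fst ` H" using xs v(1) by (cases "x j = k") auto
    next
      fix j assume j: "j \<in> I" "y j < Suc k"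
      then have "y j < k" using not_y by (auto simp: less_Suc_eq)
      then show "((g(k := v)) (x j), (g(k := v)) (y j)) \<in> H" using ys xy[OF j(1)] j(1) by auto
    qed
    then show ?thesis using strict_mono_on_lessThan_Suc_upd[OF mono] v(2) by blast
  qed
qed

definition rank :: "'a set \<Rightarrow> ('a \<times> 'a) set \<Rightarrow> 'a \<Rightarrow> nat" where
  "rank A R s = card {t\<in>A. (t, s) \<in> R \<and> (s, t) \<notin> R}"

lemma rank_le_iff:
  assumes "finite A" and "trans R" and total: "\<And>s t. s \<in> A \<Longrightarrow> t \<in> A \<Longrightarrow> (s, t) \<in> R \<or> (t, s) \<in> R"
    and "s \<in> A" and "t \<in> A"
  shows "rank A R s \<le> rank A R t \<longleftrightarrow> (s, t) \<in> R"
proof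
  assume "(s, t) \<in> R"
  then have "{u\<in>A. (u, s) \<in> R \<and> (s, u) \<notin> R} \<subseteq> {u\<in>A. (u, t) \<in> R \<and> (t, u) \<notin> R}"
    using \<open>trans R\<close> unfolding trans_def by blast
  then show "rank A R s \<le> rank A R t" unfolding rank_def using \<open>finite A\<close> by (simp add: card_mono)
next
  assume le: "rank A R s \<le> rank A R t"
  show "(s, t) \<in> R"
  proof (rule ccontr)
    assume "(s, t) \<notin> R"
    moreover from this have "(t, s) \<in> R" using total \<open>s \<in> A\<close> \<open>t \<in> A\<close> by blast
    ultimately have "insert t {u\<in>A. (u, t) \<in> R \<and> (t, u) \<notin> R} \<subseteq> {u\<in>A. (u, s) \<in> R \<and> (s, u) \<notin> R}"
      using \<open>trans R\<close> \<open>t \<in> A\<close> unfolding trans_def by blast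
    from card_mono[OF _ this] have "card (insert t {u\<in>A. (u, t) \<in> R \<and> (t, u) \<notin> R}) \<le> rank A R s"
      unfolding rank_def using \<open>finite A\<close> by simp
    then have "Suc (rank A R t) \<le> rank A R s"
      unfolding rank_def using \<open>finite A\<close> by simp
    then show False using le by simp
  qed
qed

lemma rank_less_card:
  assumes "finite A" and "s \<in> A"
  shows "rank A R s < card A"
proof -
  have "{t\<in>A. (t, s) \<in> R \<and> (s, t) \<notin> R} \<subset> A" using \<open>s \<in> A\<close> by blast
  then show ?thesis unfolding rank_def using \<open>finite A\<close> by (rule psubset_card_mono[rotated])
qed

lemma finite_Sym: "finite (Sym n)"
  unfolding Sym_def by simp

lemma ntype_rank_le_iff:
  assumes "is_ntype n R" and "s \<in> Sym n" and "t \<in> Sym n"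
  shows "rank (Sym n) R s \<le> rank (Sym n) R t \<longleftrightarrow> (s, t) \<in> R"
  using assms finite_Sym rank_le_iff[of "Sym n" R s t] unfolding is_ntype_def by blast

lemma ntype_rank_y_strict_mono:
  assumes "is_ntype n R"
  shows "strict_mono_on {1..n} (\<lambda>i. rank (Sym n) R (True, i))"
proof (rule strict_mono_onI)
  fix i j assume ij: "i \<in> {1..n}" "j \<in> {1..n}" "i < j"
  then have "((True, j), (True, i)) \<notin> R" using assms unfolding is_ntype_def strict_in_def by blast
  then show "rank (Sym n) R (True, i) < rank (Sym n) R (True, j)"
    using ntype_rank_le_iff[OF assms, of "(True, j)" "(True, i)"] ij by (auto simp: Sym_def)
qed

lemma ntype_rank_x_less_y:
  assumes "is_ntype n R" and "i \<in> {1..n}"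
  shows "rank (Sym n) R (False, i) < rank (Sym n) R (True, i)"
proof -
  have "((True, i), (False, i)) \<notin> R" using assms unfolding is_ntype_def strict_in_def by blast
  then show ?thesis using ntype_rank_le_iff[OF assms(1), of "(True, i)" "(False, i)"] assms(2)
    by (auto simp: Sym_def)
qed

lemma ntype_rank_x_neq_y:
  assumes "is_ntype n R" and "i \<in> {1..n}" and "j \<in> {1..n}"
  shows "rank (Sym n) R (False, i) \<noteq> rank (Sym n) R (True, j)"
proof
  assume eq: "rank (Sym n) R (False, i) = rank (Sym n) R (True, j)"
  have mem: "(False, i) \<in> Sym n" "(True, j) \<in> Sym n" using assms(2,3) by (auto simp: Sym_def)
  have "((False, i), (True, j)) \<in> R" "((True, j), (False, i)) \<in> R"
    using ntype_rank_le_iff[OF assms(1) mem] ntype_rank_le_iff[OF assms(1) mem(2) mem(1)] eq by auto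
  then show False using assms(1) mem unfolding is_ntype_def by force
qed

definition ntype_points :: "nat \<Rightarrow> (sym \<times> sym) set \<Rightarrow> (nat \<Rightarrow> nat) \<Rightarrow> pt set" where
  "ntype_points n R g =
     (\<lambda>i. (g (rank (Sym n) R (False, i)), g (rank (Sym n) R (True, i)))) ` {1..n}"

lemma ntype_points_realizes:
  assumes R: "is_ntype n R" and mono: "strict_mono_on {..<card (Sym n)} g"
  shows "realizes n (ntype_points n R g) R" and "card (ntype_points n R g) = n"
proof -
  let ?r = "rank (Sym n) R"
  have rank_less: "?r s \<in> {..<card (Sym n)}" if "s \<in> Sym n" for s
    using rank_less_card[OF finite_Sym that] by simp
  define a where "a i = g (?r (False, i))" for i
  define b where "b i = g (?r (True, i))" for i
  have F: "ntype_points n R g = (\<lambda>i. (a i, b i)) ` {1..n}"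
    unfolding ntype_points_def a_def b_def ..
  have b_mono: "strict_mono_on {1..n} b"
  proof (rule strict_mono_onI)
    fix i j assume ij: "i \<in> {1..n}" "j \<in> {1..n}" "i < j"
    then have "?r (True, i) < ?r (True, j)"
      using strict_mono_onD[OF ntype_rank_y_strict_mono[OF R]] by blast
    moreover have "(True, i) \<in> Sym n" "(True, j) \<in> Sym n" using ij by (auto simp: Sym_def)
    ultimately show "b i < b j" unfolding b_def using strict_mono_onD[OF mono rank_less rank_less] by blast
  qed
  have "inj_on (\<lambda>i. (a i, b i)) {1..n}"
    using strict_mono_on_imp_inj_on[OF b_mono] unfolding inj_on_def by blast
  then show "card (ntype_points n R g) = n" unfolding F by (simp add: card_image)
  show "realizes n (ntype_points n R g) R"
    unfolding realizes_def
  proof (intro exI conjI ballI)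
    show "strict_mono_on {1..n} b" by (rule b_mono)
    show "ntype_points n R g = (\<lambda>i. (a i, b i)) ` {1..n}" by (rule F)
    fix s t assume st: "s \<in> Sym n" "t \<in> Sym n"
    have "(if fst u then b (snd u) else a (snd u)) = g (?r u)" for u
      unfolding a_def b_def by (cases u) auto
    then show "(s, t) \<in> R \<longleftrightarrow>
        (if fst s then b (snd s) else a (snd s)) \<le> (if fst t then b (snd t) else a (snd t))"
      using ntype_rank_le_iff[OF R st] strict_mono_on_less_eq[OF mono rank_less rank_less] st
      by simp
  qed
qed

lemma ntype_realized_in_infinite_columns:
  assumes R: "is_ntype n R" and H: "infinite_columns H"
  shows "\<exists>F. F \<in> typed_subsets n H R"
proof -
  let ?r = "rank (Sym n) R"
  obtain g where mono: "strict_mono_on {..<card (Sym n)} g"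
    and pairs: "\<forall>i\<in>{1..n}. ?r (True, i) < card (Sym n) \<longrightarrow> (g (?r (False, i)), g (?r (True, i))) \<in> H"
    using infinite_columns_increasing_embedding[OF H ntype_rank_x_less_y[OF R]
        strict_mono_on_imp_inj_on[OF ntype_rank_y_strict_mono[OF R]] ntype_rank_x_neq_y[OF R],
        of "card (Sym n)"]
    by blast
  have "?r (True, i) < card (Sym n)" if "i \<in> {1..n}" for i
    using rank_less_card[OF finite_Sym] that by (simp add: Sym_def)
  then have "ntype_points n R g \<subseteq> H"
    using pairs unfolding ntype_points_def by blast
  moreover have "finite (ntype_points n R g)" unfolding ntype_points_def by simp
  ultimately show ?thesis
    using ntype_points_realizes[OF R mono] unfolding typed_subsets_def by blast
qed

lemma card_less_image_strict_mono_on: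
  fixes b :: "nat \<Rightarrow> 'a::linorder"
  assumes mono: "strict_mono_on {1..n} b" and i: "i \<in> {1..n}"
  shows "card {x\<in>b ` {1..n}. x < b i} = i - 1"
proof -
  have "{x\<in>b ` {1..n}. x < b i} = b ` {1..<i}"
    using i strict_mono_on_less[OF mono _ i] by fastforce
  moreover have "inj_on b {1..<i}"
    using i by (intro inj_on_subset[OF strict_mono_on_imp_inj_on[OF mono]]) auto
  ultimately show ?thesis by (simp add: card_image)
qed

lemma strict_mono_on_image_eq:
  fixes b b' :: "nat \<Rightarrow> 'a::linorder"
  assumes "strict_mono_on {1..n} b" and "strict_mono_on {1..n} b'"
    and eq: "b ` {1..n} = b' ` {1..n}" and i: "i \<in> {1..n}"
  shows "b i = b' i"
proof -
  obtain j where j: "j \<in> {1..n}" "b i = b' j" using eq i by blast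
  have "i - 1 = j - 1"
    using card_less_image_strict_mono_on[OF assms(1) i] card_less_image_strict_mono_on[OF assms(2) j(1)]
      eq j(2) by simp
  then have "i = j" using i j(1) by auto
  then show ?thesis using j(2) by simp
qed

lemma realizes_unique:
  assumes R: "is_ntype n R" and R': "is_ntype n R'"
    and "realizes n F R" and "realizes n F R'"
  shows "R = R'"
proof -
  obtain a b where b: "strict_mono_on {1..n} b" and F: "F = (\<lambda>i. (a i, b i)) ` {1..n}"
    and v: "\<forall>s\<in>Sym n. \<forall>t\<in>Sym n. (s, t) \<in> R \<longleftrightarrow>
            (if fst s then b (snd s) else a (snd s)) \<le> (if fst t then b (snd t) else a (snd t))"
    using \<open>realizes n F R\<close> unfolding realizes_def by blast
  obtain a' b' where b': "strict_mono_on {1..n} b'" and F': "F = (\<lambda>i. (a' i, b' i)) ` {1..n}"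
    and v': "\<forall>s\<in>Sym n. \<forall>t\<in>Sym n. (s, t) \<in> R' \<longleftrightarrow>
            (if fst s then b' (snd s) else a' (snd s)) \<le> (if fst t then b' (snd t) else a' (snd t))"
    using \<open>realizes n F R'\<close> unfolding realizes_def by blast
  have "b ` {1..n} = b' ` {1..n}"
    using arg_cong[where f = "image snd", OF F'] unfolding F by (simp add: image_image)
  then have b_eq: "b i = b' i" if "i \<in> {1..n}" for i
    using strict_mono_on_image_eq[OF b b' _ that] by blast
  have a_eq: "a i = a' i" if i: "i \<in> {1..n}" for i
  proof -
    obtain j where j: "j \<in> {1..n}" "(a i, b i) = (a' j, b' j)"
      using i F F' by (metis (no_types, lifting) image_iff image_eqI)
    then have "j = i" using b_eq[OF i] strict_mono_on_eqD[OF b' _ j(1) i] by simp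
    then show ?thesis using j(2) by simp
  qed
  have "(if fst s then b (snd s) else a (snd s)) = (if fst s then b' (snd s) else a' (snd s))"
    if "s \<in> Sym n" for s
    using that b_eq a_eq unfolding Sym_def by auto
  then have "\<forall>s\<in>Sym n. \<forall>t\<in>Sym n. (s, t) \<in> R \<longleftrightarrow> (s, t) \<in> R'" using v v' by simp
  moreover have "R \<subseteq> Sym n \<times> Sym n" "R' \<subseteq> Sym n \<times> Sym n"
    using R R' unfolding is_ntype_def by auto
  ultimately show ?thesis by blast
qed

definition ntype_of :: "nat \<Rightarrow> pt set \<Rightarrow> (sym \<times> sym) set" where
  "ntype_of n F = (THE R. is_ntype n R \<and> realizes n F R)"

lemma ntype_of_eq:
  assumes "is_ntype n R" and "realizes n F R"
  shows "ntype_of n F = R"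
  unfolding ntype_of_def
  by (rule the_equality) (use assms realizes_unique in blast)+

lemma finite_ntypes: "finite {R. is_ntype n R}"
proof (rule finite_subset)
  show "{R. is_ntype n R} \<subseteq> Pow (Sym n \<times> Sym n)" unfolding is_ntype_def by auto
qed (simp add: finite_Sym)

lemma non_P_point_std_realizes_all_ntypes:
  assumes "non_P_point_std W" and "H \<in> W" and "is_ntype n R"
  shows "\<exists>F. F \<in> typed_subsets n H R"
proof -
  obtain H' where "H' \<subseteq> H" and "infinite_columns H'"
    using non_P_point_std_infinite_columns_subset[OF assms(1,2)] by blast
  moreover obtain F where "F \<in> typed_subsets n H' R"
    using ntype_realized_in_infinite_columns[OF assms(3) \<open>infinite_columns H'\<close>] by blast
  ultimately have "F \<in> typed_subsets n H R" unfolding typed_subsets_def by blast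
  then show ?thesis ..
qed

text \<open>Here \<open>idx\<close> numbers the types below \<open>T n\<close>. A set realising no type gets the index of the
  junk value \<open>ntype_of n F\<close>, which is harmless as it is still below \<open>T n\<close>.\<close>

definition type_colouring ::
    "nat \<Rightarrow> (sym \<times> sym) set \<Rightarrow> (pt set \<Rightarrow> nat) \<Rightarrow> ((sym \<times> sym) set \<Rightarrow> nat) \<Rightarrow> pt set \<Rightarrow> nat" where
  "type_colouring n \<tau> c idx F =
     (if F \<in> typed_subsets n UNIV \<tau> then T n + c F else idx (ntype_of n F))"

lemma finite_type_colouring_image:
  assumes "finite (c ` typed_subsets n UNIV \<tau>)" and "\<And>R. idx R < T n"
  shows "finite (type_colouring n \<tau> c idx ` A)"
proof (rule finite_subset)
  show "type_colouring n \<tau> c idx ` A \<subseteq> {..<T n} \<union> (+) (T n) ` c ` typed_subsets n UNIV \<tau>"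
    using assms(2) unfolding type_colouring_def by auto
qed (use assms(1) in simp)

lemma card_type_colouring_image_ge:
  assumes NP: "non_P_point_std W" and "H \<in> W" and tau: "is_ntype n \<tau>"
    and idx: "inj_on idx {R. is_ntype n R}" "\<And>R. idx R < T n"
    and fin: "finite (type_colouring n \<tau> c idx ` nsubsets H n)"
  shows "T n + card (c ` typed_subsets n H \<tau>) \<le> card (type_colouring n \<tau> c idx ` nsubsets H n) + 1"
proof -
  let ?col = "type_colouring n \<tau> c idx"
  let ?others = "{R. is_ntype n R} - {\<tau>}"
  have typed_nsubsets: "typed_subsets n H R \<subseteq> nsubsets H n" for R
    unfolding typed_subsets_def nsubsets_def by auto
  have "idx R \<in> ?col ` nsubsets H n" if R: "R \<in> ?others" for R
  proof -
    obtain F where F: "F \<in> typed_subsets n H R"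
      using non_P_point_std_realizes_all_ntypes[OF NP \<open>H \<in> W\<close>] R by blast
    then have "realizes n F R" unfolding typed_subsets_def by blast
    then have "F \<notin> typed_subsets n UNIV \<tau>" and "ntype_of n F = R"
      using R realizes_unique[OF _ tau] ntype_of_eq unfolding typed_subsets_def by auto
    then have "?col F = idx R" unfolding type_colouring_def by simp
    then show ?thesis using F typed_nsubsets by (metis image_eqI subsetD)
  qed
  moreover have "T n + c F \<in> ?col ` nsubsets H n" if "F \<in> typed_subsets n H \<tau>" for F
  proof -
    have "?col F = T n + c F" using that unfolding type_colouring_def typed_subsets_def by auto
    then show ?thesis using that typed_nsubsets by (metis image_eqI subsetD)
  qed
  ultimately have sub: "idx ` ?others \<union> (+) (T n) ` c ` typed_subsets n H \<tau> \<subseteq> ?col ` nsubsets H n"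
    by blast
  have "card {R. is_ntype n R} > 0" using tau finite_ntypes by (auto simp: card_gt_0_iff)
  then have "card (idx ` ?others) + 1 = T n"
    using inj_on_subset[OF idx(1)] tau finite_ntypes unfolding T_def
    by (simp add: card_image card_Diff_singleton)
  moreover have "card ((+) (T n) ` c ` typed_subsets n H \<tau>) = card (c ` typed_subsets n H \<tau>)"
    by (simp add: card_image)
  moreover have "idx ` ?others \<inter> (+) (T n) ` c ` typed_subsets n H \<tau> = {}"
  proof -
    have "idx R \<noteq> T n + m" for R m using idx(2)[of R] by simp
    then show ?thesis by blast
  qed
  moreover have "finite (idx ` ?others \<union> (+) (T n) ` c ` typed_subsets n H \<tau>)"
    using finite_subset[OF sub fin] .
  ultimately show ?thesis using card_mono[OF fin sub] by (simp add: card_Un_disjoint)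
qed

lemma ex_ntype_index:
  assumes "is_ntype n \<tau>"
  shows "\<exists>idx. inj_on idx {R. is_ntype n R} \<and> (\<forall>R. idx R < T n)"
proof -
  obtain h where h: "bij_betw h {R. is_ntype n R} {0..<T n}"
    using ex_bij_betw_finite_nat[OF finite_ntypes] unfolding T_def by blast
  have "T n > 0" using assms finite_ntypes unfolding T_def by (auto simp: card_gt_0_iff)
  then have "inj_on (\<lambda>R. if is_ntype n R then h R else 0) {R. is_ntype n R}
      \<and> (\<forall>R. (if is_ntype n R then h R else 0) < T n)"
    using bij_betw_imp_inj_on[OF h] bij_betwE[OF h] unfolding inj_on_def by auto
  then show ?thesis by blast
qed

lemma card_image_le_one_imp_constant:
  assumes "finite (f ` A)" and "card (f ` A) \<le> 1"
  shows "\<exists>k. \<forall>x\<in>A. f x = k"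
proof (cases "A = {}")
  case False
  then obtain x where "x \<in> A" by blast
  have "\<forall>a\<in>f ` A. \<forall>b\<in>f ` A. a = b"
    using card_le_Suc0_iff_eq[OF assms(1)] assms(2) by (metis One_nat_def)
  then show ?thesis using \<open>x \<in> A\<close> by blast
qed simp

theorem mainTheorem2:
  fixes n :: nat and W :: "pt set set" and \<tau> :: "(sym \<times> sym) set"
    and c :: "pt set \<Rightarrow> nat"
  assumes "n \<ge> 1"
    and "non_P_point_std W"
    and "weakly_ramsey n (T n) W"
    and "is_ntype n \<tau>"
    and "finite (c ` typed_subsets n UNIV \<tau>)"
  shows "\<exists>H\<in>W. \<exists>k. \<forall>F\<in>typed_subsets n H \<tau>. c F = k"
proof -
  obtain idx where idx_inj: "inj_on idx {R. is_ntype n R}" and idx_less: "\<And>R. idx R < T n"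
    using ex_ntype_index[OF assms(4)] by blast
  let ?col = "type_colouring n \<tau> c idx"
  have fin_col: "finite (?col ` A)" for A
    by (rule finite_type_colouring_image[OF assms(5) idx_less])
  obtain H where "H \<in> W" and "card (?col ` nsubsets H n) \<le> T n"
    using assms(3) fin_col unfolding weakly_ramsey_def by blast
  then have "card (c ` typed_subsets n H \<tau>) \<le> 1"
    using card_type_colouring_image_ge[OF assms(2) \<open>H \<in> W\<close> assms(4) idx_inj idx_less fin_col]
    by linarith
  moreover have "finite (c ` typed_subsets n H \<tau>)"
    using assms(5) by (rule finite_subset[rotated]) (auto simp: typed_subsets_def)
  ultimately show ?thesis
    using \<open>H \<in> W\<close> card_image_le_one_imp_constant by blast
qed

end
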